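(* The logic $\mathsf{HLC}^\flat=\mathsf{ICK}\oplus(p\mathrel{\Box\!\!\!\rightarrow} p)\oplus(((p\mathrel{\Box\!\!\!\rightarrow} q)\wedge(q\mathrel{\Box\!\!\!\rightarrow} r))\to(p\mathrel{\Box\!\!\!\rightarrow} r))$ is sound and complete with respect to the class of conditional frames $(X,\leq,\mathcal{R})$ satisfying, for all $x\in X$ and upsets $a,b$: $R_a[x]\subseteq a$, and $R_a[x]\subseteq b$ implies $R_a[x]\subseteq{\uparrow}R_b[x]$.
   Context: Formulas: $\phi ::= p\mid\bot\mid\phi\wedge\phi\mid\phi\vee\phi\mid\phi\to\phi\mid\phi\mathrel{\Box\!\!\!\rightarrow}\phi$. $\mathsf{ICK}\oplus\Gamma$ is the smallest set containing intuitionistic propositional logic, $\Gamma$, $(p\mathrel{\Box\!\!\!\rightarrow}(q\wedge r))\leftrightarrow((p\mathrel{\Box\!\!\!\rightarrow} q)\wedge(p\mathrel{\Box\!\!\!\rightarrow} r))$ and $(p\mathrel{\Box\!\!\!\rightarrow}\top)\leftrightarrow\top$, closed under uniform substitution, modus ponens and congruence rules for both arguments of $\mathrel{\Box\!\!\!\rightarrow}$. A conditional frame is $(X,\leq,\mathcal{R})$, $(X,\leq)$ a nonempty preorder, $\mathcal{R}=\{R_a\mid a\text{ an upset}\}$ with $(\leq\circ R_a)\subseteq(R_a\circ\leq)$; valuations assign upsets to letters and $x\models\phi\mathrel{\Box\!\!\!\rightarrow}\psi$ iff every $y$ with $xR_{V(\phi)}y$ satisfies $\psi$. *)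

theory Defs
  imports Main
begin

datatype fm = Var nat | Bot | And fm fm | Or fm fm | Imp fm fm | Cond fm fm

definition Top :: fm where "Top = Imp Bot Bot"
definition Iff :: "fm \<Rightarrow> fm \<Rightarrow> fm" where "Iff A B = And (Imp A B) (Imp B A)"

fun subst :: "(nat \<Rightarrow> fm) \<Rightarrow> fm \<Rightarrow> fm" where
  "subst s (Var p) = s p"
| "subst s Bot = Bot"
| "subst s (And A B) = And (subst s A) (subst s B)"
| "subst s (Or A B) = Or (subst s A) (subst s B)"
| "subst s (Imp A B) = Imp (subst s A) (subst s B)"
| "subst s (Cond A B) = Cond (subst s A) (subst s B)"

inductive ipc_axiom :: "fm \<Rightarrow> bool" where
  "ipc_axiom (Imp A (Imp B A))"
| "ipc_axiom (Imp (Imp A (Imp B C)) (Imp (Imp A B) (Imp A C)))"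
| "ipc_axiom (Imp (And A B) A)"
| "ipc_axiom (Imp (And A B) B)"
| "ipc_axiom (Imp A (Imp B (And A B)))"
| "ipc_axiom (Imp A (Or A B))"
| "ipc_axiom (Imp B (Or A B))"
| "ipc_axiom (Imp (Imp A C) (Imp (Imp B C) (Imp (Or A B) C)))"
| "ipc_axiom (Imp Bot A)"

inductive ICK :: "fm set \<Rightarrow> fm \<Rightarrow> bool" for \<Gamma> :: "fm set" where
  ipc: "ipc_axiom A \<Longrightarrow> ICK \<Gamma> A"
| extra: "A \<in> \<Gamma> \<Longrightarrow> ICK \<Gamma> A"
| cond_and: "ICK \<Gamma> (Iff (Cond (Var 0) (And (Var 1) (Var 2)))
                        (And (Cond (Var 0) (Var 1)) (Cond (Var 0) (Var 2))))"
| cond_top: "ICK \<Gamma> (Iff (Cond (Var 0) Top) Top)"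
| usubst: "ICK \<Gamma> A \<Longrightarrow> ICK \<Gamma> (subst s A)"
| mp: "ICK \<Gamma> (Imp A B) \<Longrightarrow> ICK \<Gamma> A \<Longrightarrow> ICK \<Gamma> B"
| cong_left: "ICK \<Gamma> (Iff A B) \<Longrightarrow> ICK \<Gamma> (Iff (Cond A C) (Cond B C))"
| cong_right: "ICK \<Gamma> (Iff A B) \<Longrightarrow> ICK \<Gamma> (Iff (Cond C A) (Cond C B))"

definition HLC_flat_axioms :: "fm set" where
  "HLC_flat_axioms =
    {Cond (Var 0) (Var 0),
     Imp (And (Cond (Var 0) (Var 1)) (Cond (Var 1) (Var 2))) (Cond (Var 0) (Var 2))}"

abbreviation HLC_flat :: "fm \<Rightarrow> bool" where
  "HLC_flat \<equiv> ICK HLC_flat_axioms"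

text \<open>A frame is given by a carrier X, a relation le (the preorder) and a
 family R, where R a is the relation R_a (only relevant for upsets a).\<close>

definition upset :: "'w set \<Rightarrow> ('w \<Rightarrow> 'w \<Rightarrow> bool) \<Rightarrow> 'w set \<Rightarrow> bool" where
  "upset X le a \<longleftrightarrow> a \<subseteq> X \<and> (\<forall>x\<in>a. \<forall>y\<in>X. le x y \<longrightarrow> y \<in> a)"

definition up :: "'w set \<Rightarrow> ('w \<Rightarrow> 'w \<Rightarrow> bool) \<Rightarrow> 'w set \<Rightarrow> 'w set" where
  "up X le S = {y \<in> X. \<exists>s\<in>S. le s y}"

definition cond_frame ::
  "'w set \<Rightarrow> ('w \<Rightarrow> 'w \<Rightarrow> bool) \<Rightarrow> ('w set \<Rightarrow> 'w \<Rightarrow> 'w \<Rightarrow> bool) \<Rightarrow> bool" where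
  "cond_frame X le R \<longleftrightarrow>
     X \<noteq> {} \<and>
     (\<forall>x\<in>X. le x x) \<and>
     (\<forall>x\<in>X. \<forall>y\<in>X. \<forall>z\<in>X. le x y \<longrightarrow> le y z \<longrightarrow> le x z) \<and>
     (\<forall>x y. le x y \<longrightarrow> x \<in> X \<and> y \<in> X) \<and>
     (\<forall>a. upset X le a \<longrightarrow> (\<forall>x y. R a x y \<longrightarrow> x \<in> X \<and> y \<in> X)) \<and>
     (\<forall>a. upset X le a \<longrightarrow>
        (\<forall>x y z. le x y \<longrightarrow> R a y z \<longrightarrow> (\<exists>w. R a x w \<and> le w z)))"

fun sat :: "'w set \<Rightarrow> ('w \<Rightarrow> 'w \<Rightarrow> bool) \<Rightarrow> ('w set \<Rightarrow> 'w \<Rightarrow> 'w \<Rightarrow> bool)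
            \<Rightarrow> (nat \<Rightarrow> 'w set) \<Rightarrow> 'w \<Rightarrow> fm \<Rightarrow> bool" where
  "sat X le R V x (Var p) = (x \<in> V p)"
| "sat X le R V x Bot = False"
| "sat X le R V x (And A B) = (sat X le R V x A \<and> sat X le R V x B)"
| "sat X le R V x (Or A B) = (sat X le R V x A \<or> sat X le R V x B)"
| "sat X le R V x (Imp A B) =
     (\<forall>y\<in>X. le x y \<longrightarrow> sat X le R V y A \<longrightarrow> sat X le R V y B)"
| "sat X le R V x (Cond A B) =
     (\<forall>y. R {z \<in> X. sat X le R V z A} x y \<longrightarrow> sat X le R V y B)"

definition valid_in_frame ::
  "'w set \<Rightarrow> ('w \<Rightarrow> 'w \<Rightarrow> bool) \<Rightarrow> ('w set \<Rightarrow> 'w \<Rightarrow> 'w \<Rightarrow> bool) \<Rightarrow> fm \<Rightarrow> bool" where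
  "valid_in_frame X le R A \<longleftrightarrow>
     (\<forall>V. (\<forall>p. upset X le (V p)) \<longrightarrow> (\<forall>x\<in>X. sat X le R V x A))"

definition HLC_flat_frame ::
  "'w set \<Rightarrow> ('w \<Rightarrow> 'w \<Rightarrow> bool) \<Rightarrow> ('w set \<Rightarrow> 'w \<Rightarrow> 'w \<Rightarrow> bool) \<Rightarrow> bool" where
  "HLC_flat_frame X le R \<longleftrightarrow>
     cond_frame X le R \<and>
     (\<forall>x\<in>X. \<forall>a. upset X le a \<longrightarrow> {y. R a x y} \<subseteq> a) \<and>
     (\<forall>x\<in>X. \<forall>a b. upset X le a \<longrightarrow> upset X le b \<longrightarrow>
        {y. R a x y} \<subseteq> b \<longrightarrow> {y. R a x y} \<subseteq> up X le {y. R b x y})"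

end

theory Submission
  imports Defs
begin

(* Soundness: R_a[x] \<subseteq> a validates p \<box>\<rightarrow> p. For the transitivity axiom, if
   R_|p|[y] \<subseteq> |q| then every R_|p|-successor of y lies above an R_|q|-successor, where r
   holds, and truth persists upwards.
   Completeness: the canonical frame consists of the prime theories, ordered by inclusion.
   By normality of \<box>\<rightarrow> and the Lindenbaum lemma, A \<box>\<rightarrow> B \<in> W iff B lies in every prime
   theory containing {C. A \<box>\<rightarrow> C \<in> W}. The canonical R is chosen so that on the truth
   set of A it relates W to exactly these prime theories (this is where p \<box>\<rightarrow> p and
   transitivity are used), which gives the truth lemma, while the frame conditions hold
   for arbitrary upsets. *)

section \<open>Derivations in ICK\<close>

lemma ICK_K: "ICK \<Gamma> (Imp A (Imp B A))"
  by (intro ICK.ipc ipc_axiom.intros)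

lemma ICK_S: "ICK \<Gamma> (Imp (Imp A (Imp B C)) (Imp (Imp A B) (Imp A C)))"
  by (intro ICK.ipc ipc_axiom.intros)

lemma ICK_conj_pair: "ICK \<Gamma> (Imp A (Imp B (And A B)))"
  by (intro ICK.ipc ipc_axiom.intros)

lemma ICK_conjunct1: "ICK \<Gamma> (Imp (And A B) A)"
  by (intro ICK.ipc ipc_axiom.intros)

lemma ICK_conjunct2: "ICK \<Gamma> (Imp (And A B) B)"
  by (intro ICK.ipc ipc_axiom.intros)

lemma ICK_disjI1: "ICK \<Gamma> (Imp A (Or A B))"
  by (intro ICK.ipc ipc_axiom.intros)

lemma ICK_disjI2: "ICK \<Gamma> (Imp B (Or A B))"
  by (intro ICK.ipc ipc_axiom.intros)

lemma ICK_weaken: "ICK \<Gamma> A \<Longrightarrow> ICK \<Gamma> (Imp B A)"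
  by (rule ICK.mp[OF ICK_K])

lemma ICK_imp_refl: "ICK \<Gamma> (Imp A A)"
  by (rule ICK.mp[OF ICK.mp[OF ICK_S ICK_K] ICK_K[where B = A]])

lemma ICK_imp_mono: "ICK \<Gamma> (Imp A B) \<Longrightarrow> ICK \<Gamma> (Imp (Imp C A) (Imp C B))"
  by (rule ICK.mp[OF ICK_S ICK_weaken])

lemma ICK_imp_trans: "ICK \<Gamma> (Imp A B) \<Longrightarrow> ICK \<Gamma> (Imp B C) \<Longrightarrow> ICK \<Gamma> (Imp A C)"
  by (rule ICK.mp[OF ICK_imp_mono])

lemma ICK_foldr_Imp_weaken: "ICK \<Gamma> B \<Longrightarrow> ICK \<Gamma> (foldr Imp xs B)"
  by (induction xs) (auto intro: ICK_weaken)

lemma ICK_foldr_Imp_distrib: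
  "ICK \<Gamma> (Imp (foldr Imp xs (Imp B C)) (Imp (foldr Imp xs B) (foldr Imp xs C)))"
proof (induction xs)
  case Nil
  show ?case by (simp add: ICK_imp_refl)
next
  case (Cons x xs)
  then show ?case
    by (simp add: ICK_imp_trans[OF ICK_imp_mono ICK_S])
qed

lemma ICK_foldr_Imp_mp:
  "ICK \<Gamma> (foldr Imp xs (Imp B C)) \<Longrightarrow> ICK \<Gamma> (foldr Imp xs B) \<Longrightarrow> ICK \<Gamma> (foldr Imp xs C)"
  using ICK.mp[OF ICK.mp[OF ICK_foldr_Imp_distrib]] .

lemma ICK_foldr_Imp_member: "x \<in> set xs \<Longrightarrow> ICK \<Gamma> (foldr Imp xs x)"
proof (induction xs)
  case Nil
  then show ?case by simp
next
  case (Cons y ys)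
  have "ICK \<Gamma> (Imp x (foldr Imp ys x))"
    by (induction ys) (auto intro: ICK_imp_refl ICK_imp_trans[OF _ ICK_K])
  with Cons show ?case
    by (auto intro: ICK_weaken)
qed

lemma ICK_foldr_Imp_cut:
  "ICK \<Gamma> (foldr Imp ys (foldr Imp xs C)) \<Longrightarrow> (\<forall>x\<in>set xs. ICK \<Gamma> (foldr Imp ys x))
    \<Longrightarrow> ICK \<Gamma> (foldr Imp ys C)"
  by (induction xs arbitrary: C) (auto intro: ICK_foldr_Imp_mp)

lemma ICK_foldr_Imp_subset:
  "set xs \<subseteq> set ys \<Longrightarrow> ICK \<Gamma> (foldr Imp xs C) \<Longrightarrow> ICK \<Gamma> (foldr Imp ys C)"
  by (blast intro: ICK_foldr_Imp_cut ICK_foldr_Imp_weaken ICK_foldr_Imp_member)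

lemma ICK_conjI: "ICK \<Gamma> A \<Longrightarrow> ICK \<Gamma> B \<Longrightarrow> ICK \<Gamma> (And A B)"
  using ICK.mp[OF ICK.mp[OF ICK_conj_pair]] .

lemma ICK_IffD1: "ICK \<Gamma> (Iff A B) \<Longrightarrow> ICK \<Gamma> (Imp A B)"
  unfolding Iff_def by (rule ICK.mp[OF ICK_conjunct1])

lemma ICK_IffD2: "ICK \<Gamma> (Iff A B) \<Longrightarrow> ICK \<Gamma> (Imp B A)"
  unfolding Iff_def by (rule ICK.mp[OF ICK_conjunct2])

lemma ICK_Cond_And: "ICK \<Gamma> (Iff (Cond C (And A B)) (And (Cond C A) (Cond C B)))"
  using ICK.usubst[OF ICK.cond_and, of \<Gamma> "\<lambda>n. [C, A, B] ! n"]
  by (simp add: Iff_def)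

lemma ICK_Cond_Top: "ICK \<Gamma> (Iff (Cond C Top) Top)"
  using ICK.usubst[OF ICK.cond_top, of \<Gamma> "\<lambda>_. C"]
  by (simp add: Iff_def Top_def)

lemma ICK_Cond_mono: "ICK \<Gamma> (Imp A B) \<Longrightarrow> ICK \<Gamma> (Imp (Cond C A) (Cond C B))"
proof -
  assume "ICK \<Gamma> (Imp A B)"
  then have "ICK \<Gamma> (Imp A (And A B))"
    using ICK.mp[OF ICK.mp[OF ICK_S ICK_conj_pair]] by blast
  then have "ICK \<Gamma> (Iff A (And A B))"
    unfolding Iff_def by (rule ICK_conjI[OF _ ICK_conjunct1])
  then have "ICK \<Gamma> (Imp (Cond C A) (Cond C (And A B)))"
    by (intro ICK_IffD1 ICK.cong_right)
  moreover have "ICK \<Gamma> (Imp (Cond C (And A B)) (Cond C B))"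
    by (rule ICK_imp_trans[OF ICK_IffD1[OF ICK_Cond_And] ICK_conjunct2])
  ultimately show ?thesis
    by (rule ICK_imp_trans)
qed

lemma ICK_Cond_nec: "ICK \<Gamma> A \<Longrightarrow> ICK \<Gamma> (Cond C A)"
proof -
  assume "ICK \<Gamma> A"
  then have "ICK \<Gamma> (Imp (Cond C Top) (Cond C A))"
    by (intro ICK_Cond_mono ICK_weaken)
  moreover have "ICK \<Gamma> (Cond C Top)"
    using ICK.mp[OF ICK_IffD2[OF ICK_Cond_Top]] ICK_imp_refl unfolding Top_def by blast
  ultimately show ?thesis
    by (rule ICK.mp)
qed

lemma ICK_Cond_K: "ICK \<Gamma> (Imp (And (Cond C (Imp A B)) (Cond C A)) (Cond C B))"
proof -
  have "ICK \<Gamma> (Imp (And (Imp A B) A) B)"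
    using ICK.mp[OF ICK.mp[OF ICK_S ICK_conjunct1] ICK_conjunct2] .
  then show ?thesis
    by (rule ICK_imp_trans[OF ICK_IffD2[OF ICK_Cond_And] ICK_Cond_mono])
qed

lemma HLC_flat_Cond_refl: "HLC_flat (Cond A A)"
  using ICK.usubst[OF ICK.extra[of "Cond (Var 0) (Var 0)"], where s = "\<lambda>_. A"]
  by (simp add: HLC_flat_axioms_def)

lemma HLC_flat_Cond_trans: "HLC_flat (Imp (And (Cond A B) (Cond B C)) (Cond A C))"
  using ICK.usubst[OF ICK.extra[of
      "Imp (And (Cond (Var 0) (Var 1)) (Cond (Var 1) (Var 2))) (Cond (Var 0) (Var 2))"],
    where s = "\<lambda>n. [A, B, C] ! n"]
  by (simp add: HLC_flat_axioms_def)

section \<open>Derivability from hypotheses and prime theories\<close>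

(* Hypotheses cannot simply be added to \<Gamma>, which is closed under uniform substitution;
   derivability from G is expressed by implication chains instead. *)
definition derivable :: "fm set \<Rightarrow> fm set \<Rightarrow> fm \<Rightarrow> bool" where
  "derivable \<Gamma> G C \<longleftrightarrow> (\<exists>xs. set xs \<subseteq> G \<and> ICK \<Gamma> (foldr Imp xs C))"

lemma derivable_empty_iff: "derivable \<Gamma> {} C \<longleftrightarrow> ICK \<Gamma> C"
  by (simp add: derivable_def)

lemma derivable_theorem: "ICK \<Gamma> C \<Longrightarrow> derivable \<Gamma> G C"
  unfolding derivable_def by (rule exI[of _ "[]"]) simp

lemma derivable_member: "C \<in> G \<Longrightarrow> derivable \<Gamma> G C"
  unfolding derivable_def by (rule exI[of _ "[C]"]) (simp add: ICK_imp_refl)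

lemma derivable_mp:
  assumes "derivable \<Gamma> G (Imp A B)" and "derivable \<Gamma> G A"
  shows "derivable \<Gamma> G B"
proof -
  obtain xs ys where xs: "set xs \<subseteq> G" "ICK \<Gamma> (foldr Imp xs (Imp A B))"
    and ys: "set ys \<subseteq> G" "ICK \<Gamma> (foldr Imp ys A)"
    using assms unfolding derivable_def by blast
  have "set xs \<subseteq> set (xs @ ys)" "set ys \<subseteq> set (xs @ ys)"
    by auto
  then have "ICK \<Gamma> (foldr Imp (xs @ ys) B)"
    using ICK_foldr_Imp_mp ICK_foldr_Imp_subset xs(2) ys(2) by metis
  moreover have "set (xs @ ys) \<subseteq> G"
    using xs(1) ys(1) by simp
  ultimately show ?thesis
    unfolding derivable_def by blast
qed

lemma derivable_deduction: "derivable \<Gamma> (insert A G) B \<Longrightarrow> derivable \<Gamma> G (Imp A B)"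
proof -
  assume "derivable \<Gamma> (insert A G) B"
  then obtain xs where xs: "set xs \<subseteq> insert A G" "ICK \<Gamma> (foldr Imp xs B)"
    unfolding derivable_def by blast
  define ys where "ys = filter (\<lambda>x. x \<noteq> A) xs"
  have "set xs \<subseteq> set (ys @ [A])"
    using xs(1) by (auto simp: ys_def)
  then have "ICK \<Gamma> (foldr Imp (ys @ [A]) B)"
    using ICK_foldr_Imp_subset[OF _ xs(2)] by (simp del: foldr_append)
  moreover have "set ys \<subseteq> G"
    using xs(1) by (auto simp: ys_def)
  ultimately show ?thesis
    unfolding derivable_def by auto
qed

definition prime_theory :: "fm set \<Rightarrow> fm set \<Rightarrow> bool" where
  "prime_theory \<Gamma> W \<longleftrightarrow>
     (\<forall>C. derivable \<Gamma> W C \<longrightarrow> C \<in> W) \<and> Bot \<notin> W \<and> (\<forall>A B. Or A B \<in> W \<longrightarrow> A \<in> W \<or> B \<in> W)"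

lemma maximal_non_derivable_exists:
  assumes "\<not> derivable \<Gamma> G C"
  obtains M where "G \<subseteq> M" "\<not> derivable \<Gamma> M C"
    "\<And>N. M \<subseteq> N \<Longrightarrow> \<not> derivable \<Gamma> N C \<Longrightarrow> N = M"
proof -
  let ?S = "{M. G \<subseteq> M \<and> \<not> derivable \<Gamma> M C}"
  have "\<exists>M\<in>?S. \<forall>N\<in>?S. M \<subseteq> N \<longrightarrow> N = M"
  proof (rule subset_Zorn_nonempty)
    show "?S \<noteq> {}"
      using assms by blast
  next
    fix \<C> assume \<C>: "\<C> \<noteq> {}" "subset.chain ?S \<C>"
    then have members: "G \<subseteq> M" "\<not> derivable \<Gamma> M C" if "M \<in> \<C>" for M
      using that unfolding subset.chain_def by blast+
    have "\<not> derivable \<Gamma> (\<Union>\<C>) C"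
    proof
      assume "derivable \<Gamma> (\<Union>\<C>) C"
      then obtain xs where xs: "set xs \<subseteq> \<Union>\<C>" "ICK \<Gamma> (foldr Imp xs C)"
        unfolding derivable_def by blast
      obtain M where "M \<in> \<C>" "set xs \<subseteq> M"
        using finite_subset_Union_chain[OF finite_set xs(1) \<C>] by blast
      with xs(2) have "derivable \<Gamma> M C"
        unfolding derivable_def by blast
      with members(2)[OF \<open>M \<in> \<C>\<close>] show False ..
    qed
    moreover have "G \<subseteq> \<Union>\<C>"
      using \<C>(1) members(1) by blast
    ultimately show "\<Union>\<C> \<in> ?S"
      by blast
  qed
  then obtain M where M: "M \<in> ?S" and max: "\<forall>N\<in>?S. M \<subseteq> N \<longrightarrow> N = M" ..
  show thesis
  proof (rule that)
    show "G \<subseteq> M" "\<not> derivable \<Gamma> M C"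
      using M by simp_all
    fix N assume "M \<subseteq> N" "\<not> derivable \<Gamma> N C"
    with M max show "N = M"
      by auto
  qed
qed

lemma maximal_non_derivable_prime_theory:
  assumes M: "\<not> derivable \<Gamma> M C" and max: "\<And>N. M \<subseteq> N \<Longrightarrow> \<not> derivable \<Gamma> N C \<Longrightarrow> N = M"
  shows "prime_theory \<Gamma> M"
proof -
  have outside: "derivable \<Gamma> M (Imp A C)" if "A \<notin> M" for A
  proof (rule derivable_deduction, rule ccontr)
    assume "\<not> derivable \<Gamma> (insert A M) C"
    then have "insert A M = M"
      by (intro max) auto
    with that show False
      by blast
  qed
  have "A \<in> M" if "derivable \<Gamma> M A" for A
  proof (rule ccontr)
    assume "A \<notin> M"
    from M derivable_mp[OF outside[OF this] that] show False ..
  qed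
  moreover have "Bot \<notin> M"
  proof
    assume "Bot \<in> M"
    have "derivable \<Gamma> M (Imp Bot C)"
      by (intro derivable_theorem ICK.ipc ipc_axiom.intros)
    from M derivable_mp[OF this derivable_member[OF \<open>Bot \<in> M\<close>]] show False ..
  qed
  moreover have "A \<in> M \<or> B \<in> M" if "Or A B \<in> M" for A B
  proof (rule ccontr)
    assume "\<not> (A \<in> M \<or> B \<in> M)"
    then have "derivable \<Gamma> M (Imp A C)" "derivable \<Gamma> M (Imp B C)"
      using outside by blast+
    moreover have "derivable \<Gamma> M (Imp (Imp A C) (Imp (Imp B C) (Imp (Or A B) C)))"
      by (intro derivable_theorem ICK.ipc ipc_axiom.intros)
    ultimately have "derivable \<Gamma> M (Imp (Or A B) C)"
      by (meson derivable_mp)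
    from M derivable_mp[OF this derivable_member[OF that]] show False ..
  qed
  ultimately show ?thesis
    unfolding prime_theory_def by blast
qed

lemma lindenbaum:
  assumes "\<not> derivable \<Gamma> G C"
  obtains W where "G \<subseteq> W" "prime_theory \<Gamma> W" "C \<notin> W"
proof -
  obtain M where GM: "G \<subseteq> M" and M: "\<not> derivable \<Gamma> M C"
    and max: "\<And>N. M \<subseteq> N \<Longrightarrow> \<not> derivable \<Gamma> N C \<Longrightarrow> N = M"
    using maximal_non_derivable_exists[OF assms] by blast
  have "prime_theory \<Gamma> M"
    using maximal_non_derivable_prime_theory[OF M max] .
  moreover have "C \<notin> M"
    using M derivable_member by blast
  ultimately show thesis
    using GM that by blast
qed

lemma prime_theory_derivable: "prime_theory \<Gamma> W \<Longrightarrow> derivable \<Gamma> W A \<Longrightarrow> A \<in> W"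
  unfolding prime_theory_def by blast

lemma prime_theory_theorem: "prime_theory \<Gamma> W \<Longrightarrow> ICK \<Gamma> A \<Longrightarrow> A \<in> W"
  by (blast intro: prime_theory_derivable derivable_theorem)

lemma prime_theory_mp: "prime_theory \<Gamma> W \<Longrightarrow> Imp A B \<in> W \<Longrightarrow> A \<in> W \<Longrightarrow> B \<in> W"
  by (blast intro: prime_theory_derivable derivable_mp derivable_member)

lemma prime_theory_theorem_mp:
  "prime_theory \<Gamma> W \<Longrightarrow> ICK \<Gamma> (Imp A B) \<Longrightarrow> A \<in> W \<Longrightarrow> B \<in> W"
  by (blast intro: prime_theory_mp prime_theory_theorem)

lemma prime_theory_Bot: "prime_theory \<Gamma> W \<Longrightarrow> Bot \<notin> W"
  unfolding prime_theory_def by blast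

lemma prime_theory_And_iff: "prime_theory \<Gamma> W \<Longrightarrow> And A B \<in> W \<longleftrightarrow> A \<in> W \<and> B \<in> W"
  using prime_theory_theorem_mp[OF _ ICK_conjunct1]
    prime_theory_theorem_mp[OF _ ICK_conjunct2]
    prime_theory_mp[OF _ prime_theory_theorem_mp[OF _ ICK_conj_pair]]
  by blast

lemma prime_theory_Or_iff: "prime_theory \<Gamma> W \<Longrightarrow> Or A B \<in> W \<longleftrightarrow> A \<in> W \<or> B \<in> W"
  using prime_theory_theorem_mp[OF _ ICK_disjI1]
    prime_theory_theorem_mp[OF _ ICK_disjI2]
  unfolding prime_theory_def by blast

lemma prime_theory_Imp_iff:
  assumes W: "prime_theory \<Gamma> W"
  shows "Imp A B \<in> W \<longleftrightarrow> (\<forall>U. prime_theory \<Gamma> U \<longrightarrow> W \<subseteq> U \<longrightarrow> A \<in> U \<longrightarrow> B \<in> U)"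
proof
  show "\<forall>U. prime_theory \<Gamma> U \<longrightarrow> W \<subseteq> U \<longrightarrow> A \<in> U \<longrightarrow> B \<in> U" if "Imp A B \<in> W"
    using that prime_theory_mp by blast
next
  assume extensions: "\<forall>U. prime_theory \<Gamma> U \<longrightarrow> W \<subseteq> U \<longrightarrow> A \<in> U \<longrightarrow> B \<in> U"
  have "derivable \<Gamma> (insert A W) B"
  proof (rule ccontr)
    assume "\<not> derivable \<Gamma> (insert A W) B"
    then obtain U where "insert A W \<subseteq> U" "prime_theory \<Gamma> U" "B \<notin> U"
      by (rule lindenbaum)
    with extensions show False
      by blast
  qed
  then show "Imp A B \<in> W"
    using W derivable_deduction prime_theory_derivable by blast
qed

definition cond_consequents :: "fm set \<Rightarrow> fm \<Rightarrow> fm set" where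
  "cond_consequents W A = {B. Cond A B \<in> W}"

lemma prime_theory_cond_consequents_closed:
  assumes W: "prime_theory \<Gamma> W" and "derivable \<Gamma> (cond_consequents W A) B"
  shows "Cond A B \<in> W"
proof -
  obtain xs where xs: "set xs \<subseteq> cond_consequents W A" "ICK \<Gamma> (foldr Imp xs B)"
    using assms(2) unfolding derivable_def by blast
  have "Cond A C \<in> W" if "Cond A (foldr Imp ys C) \<in> W" "set ys \<subseteq> cond_consequents W A" for ys C
    using that
  proof (induction ys)
    case (Cons y ys)
    then have "And (Cond A (Imp y (foldr Imp ys C))) (Cond A y) \<in> W"
      using prime_theory_And_iff[OF W] by (simp add: cond_consequents_def)
    then have "Cond A (foldr Imp ys C) \<in> W"
      by (rule prime_theory_theorem_mp[OF W ICK_Cond_K])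
    with Cons show ?case
      by simp
  qed simp
  moreover have "Cond A (foldr Imp xs B) \<in> W"
    using prime_theory_theorem[OF W ICK_Cond_nec[OF xs(2)]] .
  ultimately show ?thesis
    using xs(1) by blast
qed

lemma prime_theory_Cond_iff:
  assumes W: "prime_theory \<Gamma> W"
  shows "Cond A B \<in> W \<longleftrightarrow> (\<forall>U. prime_theory \<Gamma> U \<longrightarrow> cond_consequents W A \<subseteq> U \<longrightarrow> B \<in> U)"
proof
  show "\<forall>U. prime_theory \<Gamma> U \<longrightarrow> cond_consequents W A \<subseteq> U \<longrightarrow> B \<in> U" if "Cond A B \<in> W"
    using that unfolding cond_consequents_def by blast
next
  assume extensions: "\<forall>U. prime_theory \<Gamma> U \<longrightarrow> cond_consequents W A \<subseteq> U \<longrightarrow> B \<in> U"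
  have "derivable \<Gamma> (cond_consequents W A) B"
  proof (rule ccontr)
    assume "\<not> derivable \<Gamma> (cond_consequents W A) B"
    then obtain U where "cond_consequents W A \<subseteq> U" "prime_theory \<Gamma> U" "B \<notin> U"
      by (rule lindenbaum)
    with extensions show False
      by blast
  qed
  then show "Cond A B \<in> W"
    by (rule prime_theory_cond_consequents_closed[OF W])
qed

section \<open>Soundness\<close>

context
  fixes X :: "'w set" and le and R
  assumes frame: "cond_frame X le R"
begin

lemma cond_frame_le_carrier: "le x y \<Longrightarrow> x \<in> X \<and> y \<in> X"
  using frame unfolding cond_frame_def by blast

lemma cond_frame_le_refl: "x \<in> X \<Longrightarrow> le x x"
  using frame unfolding cond_frame_def by blast

lemma cond_frame_le_trans: "le x y \<Longrightarrow> le y z \<Longrightarrow> le x z"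
  using frame cond_frame_le_carrier unfolding cond_frame_def by blast

lemma cond_frame_R_carrier: "upset X le a \<Longrightarrow> R a x y \<Longrightarrow> x \<in> X \<and> y \<in> X"
  using frame unfolding cond_frame_def by blast

lemma cond_frame_R_back: "upset X le a \<Longrightarrow> le x y \<Longrightarrow> R a y z \<Longrightarrow> \<exists>w. R a x w \<and> le w z"
  using frame unfolding cond_frame_def by blast

lemma sat_mono:
  assumes V: "\<forall>p. upset X le (V p)"
  shows "le x y \<Longrightarrow> sat X le R V x A \<Longrightarrow> sat X le R V y A"
proof (induction A arbitrary: x y)
  case (Var p)
  then show ?case
    using V cond_frame_le_carrier unfolding upset_def by auto
next
  case (Imp A B)
  then show ?case
    using cond_frame_le_trans cond_frame_le_carrier by auto
next
  case (Cond A B)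
  have "upset X le {z \<in> X. sat X le R V z A}"
    unfolding upset_def using Cond.IH(1) cond_frame_le_carrier by blast
  show ?case
  proof (simp, intro allI impI)
    fix z assume "R {z \<in> X. sat X le R V z A} y z"
    then obtain w where "R {z \<in> X. sat X le R V z A} x w" "le w z"
      using cond_frame_R_back[OF \<open>upset X le _\<close> Cond.prems(1)] by blast
    with Cond.prems(2) Cond.IH(2) show "sat X le R V z B"
      by simp
  qed
qed auto

lemma upset_truth_set:
  assumes "\<forall>p. upset X le (V p)"
  shows "upset X le {z \<in> X. sat X le R V z A}"
  unfolding upset_def using sat_mono[OF assms] cond_frame_le_carrier by blast

lemma sat_subst:
  assumes V: "\<forall>p. upset X le (V p)"
  shows "x \<in> X \<Longrightarrow> sat X le R V x (subst s A) = sat X le R (\<lambda>p. {z \<in> X. sat X le R V z (s p)}) x A"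
proof (induction A arbitrary: x)
  case (Cond A B)
  let ?V' = "\<lambda>p. {z \<in> X. sat X le R V z (s p)}"
  have "\<forall>p. upset X le (?V' p)"
    using upset_truth_set[OF V] by blast
  then have "upset X le {z \<in> X. sat X le R ?V' z A}"
    by (rule upset_truth_set)
  then have "\<forall>y. R {z \<in> X. sat X le R ?V' z A} x y \<longrightarrow>
      (sat X le R V y (subst s B) \<longleftrightarrow> sat X le R ?V' y B)"
    using cond_frame_R_carrier Cond.IH(2) by blast
  moreover have "{z \<in> X. sat X le R V z (subst s A)} = {z \<in> X. sat X le R ?V' z A}"
    using Cond.IH(1) by auto
  ultimately show ?case
    unfolding subst.simps sat.simps by simp
qed simp_all

lemma sat_Imp_mp: "x \<in> X \<Longrightarrow> sat X le R V x (Imp A B) \<Longrightarrow> sat X le R V x A \<Longrightarrow> sat X le R V x B"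
  using cond_frame_le_refl by simp

lemma valid_Iff_truth_set_eq:
  assumes "valid_in_frame X le R (Iff A B)" and "\<forall>p. upset X le (V p)"
  shows "{z \<in> X. sat X le R V z A} = {z \<in> X. sat X le R V z B}"
proof -
  have "sat X le R V z (Imp A B)" "sat X le R V z (Imp B A)" if "z \<in> X" for z
    using assms that unfolding valid_in_frame_def Iff_def by auto
  then show ?thesis
    using sat_Imp_mp by blast
qed

lemma ipc_axiom_valid: "ipc_axiom A \<Longrightarrow> valid_in_frame X le R A"
  unfolding valid_in_frame_def
proof (intro allI impI ballI)
  fix V :: "nat \<Rightarrow> 'w set" and x
  assume "ipc_axiom A" and V: "\<forall>p. upset X le (V p)" and "x \<in> X"
  note mono = sat_mono[OF V] and trans = cond_frame_le_trans
    and refl = cond_frame_le_refl and carrier = cond_frame_le_carrier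
  from \<open>ipc_axiom A\<close> show "sat X le R V x A"
  proof cases
    case (2 A B C)
    then show ?thesis
      by simp (meson trans carrier refl)
  next
    case (8 A C B)
    then show ?thesis
      by simp (meson trans carrier)
  qed (auto intro: mono)
qed

end

lemma ICK_sound:
  fixes X :: "'w set"
  assumes frame: "cond_frame X le R" and \<Gamma>: "\<forall>B\<in>\<Gamma>. valid_in_frame X le R B"
  shows "ICK \<Gamma> A \<Longrightarrow> valid_in_frame X le R A"
proof (induction A rule: ICK.induct)
  case (ipc A)
  then show ?case
    by (rule ipc_axiom_valid[OF frame])
next
  case (extra A)
  with \<Gamma> show ?case
    by blast
next
  case cond_and
  then show ?case
    unfolding valid_in_frame_def Iff_def by auto
next
  case cond_top
  then show ?case
    unfolding valid_in_frame_def Iff_def Top_def by auto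
next
  case (usubst A s)
  show ?case
    unfolding valid_in_frame_def
  proof (intro allI impI ballI)
    fix V :: "nat \<Rightarrow> 'w set" and x
    assume V: "\<forall>p. upset X le (V p)" and "x \<in> X"
    have "upset X le {z \<in> X. sat X le R V z (s p)}" for p
      using upset_truth_set[OF frame V] .
    from usubst.IH[unfolded valid_in_frame_def, rule_format, OF this \<open>x \<in> X\<close>]
    show "sat X le R V x (subst s A)"
      unfolding sat_subst[OF frame V \<open>x \<in> X\<close>] .
  qed
next
  case (mp A B)
  then show ?case
    using sat_Imp_mp[OF frame] unfolding valid_in_frame_def by blast
next
  case (cong_left A B C)
  then show ?case
    using valid_Iff_truth_set_eq[OF frame] unfolding valid_in_frame_def
    by (simp add: Iff_def)
next
  case (cong_right A B C)
  have "R {z \<in> X. sat X le R V z C} y z \<Longrightarrow> sat X le R V z A \<longleftrightarrow> sat X le R V z B"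
    if "\<forall>p. upset X le (V p)" for V y z
    using valid_Iff_truth_set_eq[OF frame cong_right.IH that]
      cond_frame_R_carrier[OF frame upset_truth_set[OF frame that]] by blast
  then show ?case
    unfolding valid_in_frame_def by (simp add: Iff_def)
qed

lemma HLC_flat_axioms_valid:
  fixes X :: "'w set"
  assumes frame: "HLC_flat_frame X le R" and "B \<in> HLC_flat_axioms"
  shows "valid_in_frame X le R B"
  unfolding valid_in_frame_def
proof (intro allI impI ballI)
  fix V :: "nat \<Rightarrow> 'w set" and x
  assume V: "\<forall>p. upset X le (V p)" and "x \<in> X"
  have refl: "{z. R a y z} \<subseteq> a" if "y \<in> X" "upset X le a" for y a
    using frame that unfolding HLC_flat_frame_def by blast
  have trans: "{z. R a y z} \<subseteq> up X le {z. R b y z}"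
    if "y \<in> X" "upset X le a" "upset X le b" "{z. R a y z} \<subseteq> b" for y a b
    using frame that unfolding HLC_flat_frame_def by blast
  have truth_set: "{z \<in> X. z \<in> V p} = V p" for p
    using V unfolding upset_def by blast
  from \<open>B \<in> HLC_flat_axioms\<close> consider
      "B = Cond (Var 0) (Var 0)"
    | "B = Imp (And (Cond (Var 0) (Var 1)) (Cond (Var 1) (Var 2))) (Cond (Var 0) (Var 2))"
    unfolding HLC_flat_axioms_def by blast
  then show "sat X le R V x B"
  proof cases
    case 1
    with refl[OF \<open>x \<in> X\<close> V[rule_format]] show ?thesis
      by (auto simp: truth_set)
  next
    case 2
    have "z \<in> V 2" if y: "y \<in> X" and R01: "{w. R (V 0) y w} \<subseteq> V 1"
      and R12: "{w. R (V 1) y w} \<subseteq> V 2" and "R (V 0) y z" for y z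
    proof -
      have "z \<in> up X le {w. R (V 1) y w}"
        using trans[OF y V[rule_format] V[rule_format] R01] \<open>R (V 0) y z\<close> by blast
      then obtain w where "R (V 1) y w" "le w z" "z \<in> X"
        unfolding up_def by blast
      with R12 V show ?thesis
        unfolding upset_def by blast
    qed
    with 2 show ?thesis
      by (auto simp: truth_set)
  qed
qed

theorem HLC_flat_sound: "HLC_flat A \<Longrightarrow> HLC_flat_frame X le R \<Longrightarrow> valid_in_frame X le R A"
  by (rule ICK_sound) (auto simp: HLC_flat_frame_def intro: HLC_flat_axioms_valid)

section \<open>The canonical frame\<close>

definition canonical_worlds :: "fm set set" where
  "canonical_worlds = {W. prime_theory HLC_flat_axioms W}"

definition canonical_le :: "fm set \<Rightarrow> fm set \<Rightarrow> bool" where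
  "canonical_le W U \<longleftrightarrow> W \<in> canonical_worlds \<and> U \<in> canonical_worlds \<and> W \<subseteq> U"

(* On the truth set of A this is just cond_consequents W A \<subseteq> U (canonical_R_truth_set).
   Quantifying over extensions W' gives the monotonicity condition of conditional frames,
   and since the clause for a only asks the consequents to force membership in a,
   R_a[W] \<subseteq> b implies R_a[W] \<subseteq> R_b[W]. *)
definition canonical_R :: "fm set set \<Rightarrow> fm set \<Rightarrow> fm set \<Rightarrow> bool" where
  "canonical_R a W U \<longleftrightarrow> W \<in> canonical_worlds \<and> U \<in> canonical_worlds \<and>
     (\<exists>A. \<exists>W'\<in>canonical_worlds. W \<subseteq> W' \<and> cond_consequents W' A \<subseteq> U \<and>
        (\<forall>U'\<in>canonical_worlds. cond_consequents W' A \<subseteq> U' \<longrightarrow> U' \<in> a))"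

definition canonical_val :: "nat \<Rightarrow> fm set set" where
  "canonical_val p = {W \<in> canonical_worlds. Var p \<in> W}"

abbreviation canonical_sat :: "fm set \<Rightarrow> fm \<Rightarrow> bool" where
  "canonical_sat \<equiv> sat canonical_worlds canonical_le canonical_R canonical_val"

lemma canonical_R_truth_set:
  assumes W: "W \<in> canonical_worlds"
  shows "canonical_R {U \<in> canonical_worlds. A \<in> U} W U \<longleftrightarrow>
    U \<in> canonical_worlds \<and> cond_consequents W A \<subseteq> U"
proof
  assume R: "canonical_R {U \<in> canonical_worlds. A \<in> U} W U"
  then have U: "U \<in> canonical_worlds"
    by (simp add: canonical_R_def)
  from R have "\<exists>F. \<exists>W'\<in>canonical_worlds. W \<subseteq> W' \<and> cond_consequents W' F \<subseteq> U \<and>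
      (\<forall>U'\<in>canonical_worlds. cond_consequents W' F \<subseteq> U' \<longrightarrow> A \<in> U')"
    by (simp add: canonical_R_def)
  then obtain F W' where W': "W' \<in> canonical_worlds" "W \<subseteq> W'"
    and "cond_consequents W' F \<subseteq> U"
    and "\<forall>U'\<in>canonical_worlds. cond_consequents W' F \<subseteq> U' \<longrightarrow> A \<in> U'"
    by blast
  moreover from W'(1) have pt: "prime_theory HLC_flat_axioms W'"
    by (simp add: canonical_worlds_def)
  ultimately have "Cond F A \<in> W'"
    unfolding prime_theory_Cond_iff[OF pt] by (simp add: canonical_worlds_def)
  have "Cond F B \<in> W'" if "B \<in> cond_consequents W A" for B
  proof -
    from that W'(2) have "Cond A B \<in> W'"
      by (auto simp: cond_consequents_def)
    with \<open>Cond F A \<in> W'\<close> have "And (Cond F A) (Cond A B) \<in> W'"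
      using prime_theory_And_iff[OF pt] by blast
    then show ?thesis
      by (rule prime_theory_theorem_mp[OF pt HLC_flat_Cond_trans])
  qed
  with U \<open>cond_consequents W' F \<subseteq> U\<close> show "U \<in> canonical_worlds \<and> cond_consequents W A \<subseteq> U"
    unfolding cond_consequents_def by blast
next
  assume "U \<in> canonical_worlds \<and> cond_consequents W A \<subseteq> U"
  moreover have "Cond A A \<in> W"
    using W prime_theory_theorem[OF _ HLC_flat_Cond_refl] by (simp add: canonical_worlds_def)
  then have "\<forall>U'\<in>canonical_worlds. cond_consequents W A \<subseteq> U' \<longrightarrow> U' \<in> {U \<in> canonical_worlds. A \<in> U}"
    unfolding cond_consequents_def by blast
  ultimately show "canonical_R {U \<in> canonical_worlds. A \<in> U} W U"
    using W unfolding canonical_R_def by blast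
qed

lemma truth_lemma: "W \<in> canonical_worlds \<Longrightarrow> canonical_sat W A \<longleftrightarrow> A \<in> W"
proof (induction A arbitrary: W)
  case (Var p)
  then show ?case
    by (simp add: canonical_val_def)
next
  case Bot
  then show ?case
    using prime_theory_Bot by (simp add: canonical_worlds_def)
next
  case (And A B)
  then show ?case
    using prime_theory_And_iff by (simp add: canonical_worlds_def)
next
  case (Or A B)
  then show ?case
    using prime_theory_Or_iff by (simp add: canonical_worlds_def)
next
  case (Imp A B)
  have "canonical_le W U \<longleftrightarrow> W \<subseteq> U" if "U \<in> canonical_worlds" for U
    using Imp.prems that by (simp add: canonical_le_def)
  then have "canonical_sat W (Imp A B) \<longleftrightarrow>
      (\<forall>U\<in>canonical_worlds. W \<subseteq> U \<longrightarrow> canonical_sat U A \<longrightarrow> canonical_sat U B)"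
    by (simp del: sat.simps add: sat.simps(5))
  also have "\<dots> \<longleftrightarrow> (\<forall>U\<in>canonical_worlds. W \<subseteq> U \<longrightarrow> A \<in> U \<longrightarrow> B \<in> U)"
    using Imp.IH by blast
  also have "\<dots> \<longleftrightarrow> Imp A B \<in> W"
    using prime_theory_Imp_iff Imp.prems by (simp add: canonical_worlds_def)
  finally show ?case .
next
  case (Cond A B)
  have "{U \<in> canonical_worlds. canonical_sat U A} = {U \<in> canonical_worlds. A \<in> U}"
    using Cond.IH(1) by auto
  then have "canonical_sat W (Cond A B) \<longleftrightarrow>
      (\<forall>U. canonical_R {U \<in> canonical_worlds. A \<in> U} W U \<longrightarrow> canonical_sat U B)"
    by simp
  also have "\<dots> \<longleftrightarrow> (\<forall>U\<in>canonical_worlds. cond_consequents W A \<subseteq> U \<longrightarrow> B \<in> U)"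
  proof -
    have "(canonical_R {U \<in> canonical_worlds. A \<in> U} W U \<longrightarrow> canonical_sat U B) \<longleftrightarrow>
        (U \<in> canonical_worlds \<longrightarrow> cond_consequents W A \<subseteq> U \<longrightarrow> B \<in> U)" for U
      using canonical_R_truth_set[OF Cond.prems, where U = U] Cond.IH(2)[of U] by blast
    then show ?thesis
      by blast
  qed
  also have "\<dots> \<longleftrightarrow> Cond A B \<in> W"
    using prime_theory_Cond_iff Cond.prems by (simp add: canonical_worlds_def)
  finally show ?case .
qed

lemma canonical_cond_frame:
  assumes "canonical_worlds \<noteq> {}"
  shows "cond_frame canonical_worlds canonical_le canonical_R"
proof -
  have zigzag: "\<exists>V. canonical_R a W V \<and> canonical_le V U"
    if "canonical_le W W'" "canonical_R a W' U" for a W W' U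
  proof -
    from that have "canonical_R a W U"
      unfolding canonical_le_def canonical_R_def by (meson order_trans)
    moreover from that(2) have "canonical_le U U"
      by (simp add: canonical_R_def canonical_le_def)
    ultimately show ?thesis
      by blast
  qed
  show ?thesis
    unfolding cond_frame_def
  proof (intro conjI)
    show "\<forall>a. upset canonical_worlds canonical_le a \<longrightarrow> (\<forall>W W' U. canonical_le W W' \<longrightarrow>
        canonical_R a W' U \<longrightarrow> (\<exists>V. canonical_R a W V \<and> canonical_le V U))"
      using zigzag by blast
  qed (use assms in \<open>auto simp: canonical_le_def canonical_R_def\<close>)
qed

lemma canonical_HLC_flat_frame:
  assumes "canonical_worlds \<noteq> {}"
  shows "HLC_flat_frame canonical_worlds canonical_le canonical_R"
proof -
  have "{U. canonical_R a W U} \<subseteq> a" for a W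
    unfolding canonical_R_def by blast
  moreover have "{U. canonical_R a W U} \<subseteq> up canonical_worlds canonical_le {U. canonical_R b W U}"
    if "{U. canonical_R a W U} \<subseteq> b" for a b W
  proof
    fix U assume "U \<in> {U. canonical_R a W U}"
    then obtain F W' where W: "W \<in> canonical_worlds" and U: "U \<in> canonical_worlds"
      and W': "W' \<in> canonical_worlds" "W \<subseteq> W'" "cond_consequents W' F \<subseteq> U"
      and forces_a: "\<forall>U'\<in>canonical_worlds. cond_consequents W' F \<subseteq> U' \<longrightarrow> U' \<in> a"
      unfolding canonical_R_def by blast
    have "canonical_R a W U'" if "U' \<in> canonical_worlds" "cond_consequents W' F \<subseteq> U'" for U'
      unfolding canonical_R_def using W W' forces_a that by blast
    with \<open>{U. canonical_R a W U} \<subseteq> b\<close>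
    have "\<forall>U'\<in>canonical_worlds. cond_consequents W' F \<subseteq> U' \<longrightarrow> U' \<in> b"
      by blast
    with W U W' have "canonical_R b W U"
      unfolding canonical_R_def by blast
    with U show "U \<in> up canonical_worlds canonical_le {U. canonical_R b W U}"
      unfolding up_def canonical_le_def by blast
  qed
  ultimately show ?thesis
    using canonical_cond_frame[OF assms] unfolding HLC_flat_frame_def by blast
qed

theorem HLC_flat_complete:
  assumes valid: "\<forall>(X :: fm set set) le R. HLC_flat_frame X le R \<longrightarrow> valid_in_frame X le R A"
  shows "HLC_flat A"
proof (rule ccontr)
  assume "\<not> HLC_flat A"
  then have "\<not> derivable HLC_flat_axioms {} A"
    by (simp add: derivable_empty_iff)
  then obtain W where W: "prime_theory HLC_flat_axioms W" "A \<notin> W"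
    by (rule lindenbaum)
  then have "W \<in> canonical_worlds"
    by (simp add: canonical_worlds_def)
  then have "HLC_flat_frame canonical_worlds canonical_le canonical_R"
    using canonical_HLC_flat_frame by blast
  with valid have "valid_in_frame canonical_worlds canonical_le canonical_R A"
    by blast
  moreover have "upset canonical_worlds canonical_le (canonical_val p)" for p
    unfolding upset_def canonical_val_def canonical_le_def by blast
  ultimately have "canonical_sat W A"
    using \<open>W \<in> canonical_worlds\<close> unfolding valid_in_frame_def by blast
  with W(2) show False
    using truth_lemma[OF \<open>W \<in> canonical_worlds\<close>] by blast
qed

theorem theorem5p10:
  shows "(\<forall>A (X :: 'w set) le R. HLC_flat A \<longrightarrow> HLC_flat_frame X le R \<longrightarrow> valid_in_frame X le R A)
       \<and> (\<forall>A. (\<forall>(X :: fm set set) le R. HLC_flat_frame X le R \<longrightarrow> valid_in_frame X le R A)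
              \<longrightarrow> HLC_flat A)"
  using HLC_flat_sound HLC_flat_complete by blast

end
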